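(* Let $G$ be a finite simple graph and $k\ge 1$ an integer. If $Z_k(G)=k$, then $Z_{k-1}(G)=k$.
   Context: Filling rule: if a filled vertex has exactly one unfilled neighbor (and any number of filled neighbors), that neighbor becomes filled; "applying the filling rule in a subgraph $H$" means applying it with neighborhoods taken in $H$. The $Z_q$-Game on $G$ ($q\ge 0$ an integer): initially all vertices are unfilled; a player repeatedly performs one of the following operations until all vertices are filled: (1) for one token, change any vertex from unfilled to filled; (2) at no cost, apply the filling rule in $G$; (3) if $F$ is the current set of filled vertices and $U_1,\dots,U_k$ are the vertex sets of the connected components of $G[V(G)\setminus F]$ with $k\ge q+1$, the player announces a selection of at least $q+1$ of the $U_i$ to an oracle (an adversary), the oracle returns a nonempty subset $\{U_{i_1},\dots,U_{i_\ell}\}$ of the selected components, and the player may at no cost apply the filling rule in $G[F\cup U_{i_1}\cup\cdots\cup U_{i_\ell}]$. $Z_q(G)$ is the minimum number of tokens with which the player can guarantee that all vertices become filled, regardless of the oracle's responses. *)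

theory Defs
  imports Main
begin

definition simple_graph :: "'a set \<Rightarrow> ('a \<Rightarrow> 'a \<Rightarrow> bool) \<Rightarrow> bool" where
  "simple_graph V E \<longleftrightarrow> finite V \<and> (\<forall>x y. E x y \<longrightarrow> E y x)
     \<and> (\<forall>x. \<not> E x x) \<and> (\<forall>x y. E x y \<longrightarrow> x \<in> V \<and> y \<in> V)"

definition components :: "('a \<Rightarrow> 'a \<Rightarrow> bool) \<Rightarrow> 'a set \<Rightarrow> 'a set set" where
  "components E W =
     (\<lambda>x. {y \<in> W. (\<lambda>a b. a \<in> W \<and> b \<in> W \<and> E a b)\<^sup>*\<^sup>* x y}) ` W"

definition fill_step :: "('a \<Rightarrow> 'a \<Rightarrow> bool) \<Rightarrow> 'a set \<Rightarrow> 'a set \<Rightarrow> 'a set \<Rightarrow> bool" where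
  "fill_step E H F F' \<longleftrightarrow> (\<exists>u w. u \<in> F \<and> u \<in> H \<and> w \<in> H - F \<and> E u w \<and>
      (\<forall>x \<in> H - F. E u x \<longrightarrow> x = w) \<and> F' = insert w F)"

text \<open>zq_win V E q t F: from the position with filled set F, the player can
  guarantee (against every adversary answer) that all vertices get filled using at most
  t further tokens.\<close>
inductive zq_win :: "'a set \<Rightarrow> ('a \<Rightarrow> 'a \<Rightarrow> bool) \<Rightarrow> nat \<Rightarrow> nat \<Rightarrow> 'a set \<Rightarrow> bool"
  for V E q where
  finished: "F = V \<Longrightarrow> zq_win V E q t F"
| token: "v \<in> V - F \<Longrightarrow> zq_win V E q t (insert v F) \<Longrightarrow> zq_win V E q (Suc t) F"
| force: "fill_step E V F F' \<Longrightarrow> zq_win V E q t F' \<Longrightarrow> zq_win V E q t F"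
| adversary_move: "S \<subseteq> components E (V - F) \<Longrightarrow> card S \<ge> q + 1 \<Longrightarrow>
     (\<forall>R. R \<subseteq> S \<and> R \<noteq> {} \<longrightarrow>
        (\<exists>F'. (fill_step E (F \<union> \<Union>R))\<^sup>*\<^sup>* F F' \<and> zq_win V E q t F'))
     \<Longrightarrow> zq_win V E q t F"

definition Zq :: "'a set \<Rightarrow> ('a \<Rightarrow> 'a \<Rightarrow> bool) \<Rightarrow> nat \<Rightarrow> nat" where
  "Zq V E q = (LEAST t. zq_win V E q t {})"

end

theory Submission
  imports Defs
begin

text \<open>Every strategy for \<open>Z\<^sub>k\<close> is a strategy for \<open>Z\<^sub>k\<^sub>-\<^sub>1\<close>, so \<open>Z\<^sub>k\<^sub>-\<^sub>1 \<le> Z\<^sub>k\<close>.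
  Conversely, consider a \<open>Z\<^sub>k\<^sub>-\<^sub>1\<close> strategy that uses \<open>t < k\<close> tokens, and call a filled
  vertex active if it has an unfilled neighbour. A token creates at most one new active
  vertex and a forcing step never increases their number, so throughout the play the number of active vertices
  plus the remaining tokens stays at most \<open>k - 1\<close>. Whenever the player announces at
  least \<open>k\<close> components, there are thus more components than active vertices, and the
  oracle can answer with a nonempty subfamily in which every active vertex touching it
  has at least two unfilled neighbours; the filling rule then does nothing. Hence the
  oracle never helps, the same strategy wins \<open>Z\<^sub>k\<close>, and \<open>Z\<^sub>k \<le> t\<close>.\<close>

definition active :: "'a set \<Rightarrow> ('a \<Rightarrow> 'a \<Rightarrow> bool) \<Rightarrow> 'a set \<Rightarrow> 'a set" where
  "active V E F = {x \<in> V \<inter> F. \<exists>y \<in> V - F. E x y}"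

lemma finite_active: "finite V \<Longrightarrow> finite (active V E F)"
  unfolding active_def by auto

lemma card_active_insert_le:
  assumes "finite V"
  shows "card (active V E (insert v F)) \<le> card (active V E F) + 1"
proof -
  have "active V E (insert v F) \<subseteq> insert v (active V E F)"
    unfolding active_def by auto
  then have "card (active V E (insert v F)) \<le> card (insert v (active V E F))"
    by (intro card_mono) (simp_all add: finite_active assms)
  also have "\<dots> \<le> card (active V E F) + 1"
    by (simp add: card_insert_if finite_active assms)
  finally show ?thesis .
qed

lemma card_active_fill_step_le:
  assumes "finite V" and "fill_step E V F F'"
  shows "card (active V E F') \<le> card (active V E F)"
proof -
  obtain u w where u: "u \<in> F" "u \<in> V" and w: "w \<in> V - F" "E u w"
    and unique: "\<forall>x \<in> V - F. E u x \<longrightarrow> x = w" and F': "F' = insert w F"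
    using assms(2) unfolding fill_step_def by blast
  have u_active: "u \<in> active V E F"
    using u w unfolding active_def by blast
  \<comment> \<open>\<open>u\<close> loses its only unfilled neighbour, while \<open>w\<close> may become active.\<close>
  have "active V E F' \<subseteq> insert w (active V E F - {u})"
  proof
    fix x assume "x \<in> active V E F'"
    then obtain y where "x \<in> V" "x \<in> insert w F" "y \<in> V - insert w F" "E x y"
      unfolding active_def F' by blast
    moreover from this have "x \<noteq> u" using unique by blast
    ultimately show "x \<in> insert w (active V E F - {u})"
      unfolding active_def by blast
  qed
  then have "card (active V E F') \<le> card (insert w (active V E F - {u}))"
    by (intro card_mono) (simp_all add: finite_active assms(1))
  also have "\<dots> \<le> card (active V E F - {u}) + 1"
    by (simp add: card_insert_if finite_active assms(1))
  also have "\<dots> = card (active V E F)"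
    using card_Suc_Diff1[OF finite_active[OF assms(1)] u_active] by simp
  finally show ?thesis .
qed

lemma exists_subfamily_without_unique_neighbours:
  fixes N :: "'a \<Rightarrow> 'b \<Rightarrow> bool"
  assumes "finite A" and "finite S" and "card A < card S" and "pairwise disjnt S"
  shows "\<exists>R. R \<subseteq> S \<and> R \<noteq> {} \<and>
    (\<forall>a\<in>A. \<forall>w\<in>\<Union>R. N a w \<longrightarrow> (\<exists>w'\<in>\<Union>R. w' \<noteq> w \<and> N a w'))"
  using assms
proof (induction "card A" arbitrary: A S rule: less_induct)
  case less
  show ?case
  proof (cases "\<forall>a\<in>A. \<forall>w\<in>\<Union>S. N a w \<longrightarrow> (\<exists>w'\<in>\<Union>S. w' \<noteq> w \<and> N a w')")
    case True
    moreover have "S \<noteq> {}" using less.prems(3) by auto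
    ultimately show ?thesis by blast
  next
    case False
    then obtain a w where a: "a \<in> A" and w: "w \<in> \<Union>S" "N a w"
      and unique: "\<forall>w'\<in>\<Union>S. N a w' \<longrightarrow> w' = w" by blast
    \<comment> \<open>Drop the member of \<open>S\<close> containing \<open>w\<close>; then \<open>a\<close> has no neighbour left in \<open>\<Union>S'\<close>.\<close>
    define S' where "S' = {U \<in> S. w \<notin> U}"
    obtain U0 where U0: "U0 \<in> S" "w \<in> U0" using w by blast
    have "{U \<in> S. w \<in> U} \<subseteq> {U0}"
      using less.prems(4) U0 unfolding pairwise_def disjnt_def by blast
    then have "card {U \<in> S. w \<in> U} \<le> 1"
      using card_mono[of "{U0}"] by simp
    moreover have "card S \<le> card S' + card {U \<in> S. w \<in> U}"
    proof -
      have "S = S' \<union> {U \<in> S. w \<in> U}" unfolding S'_def by auto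
      then show ?thesis by (metis card_Un_le)
    qed
    ultimately have card_S': "card S \<le> card S' + 1" by linarith
    have card_A: "card (A - {a}) + 1 = card A"
      using a less.prems(1) card_Suc_Diff1 by fastforce
    have "pairwise disjnt S'"
      using less.prems(4) unfolding S'_def by (rule pairwise_subset) blast
    moreover have "finite S'" using less.prems(2) unfolding S'_def by simp
    moreover have "card (A - {a}) < card A" "card (A - {a}) < card S'"
      using card_A card_S' less.prems(3) by linarith+
    ultimately obtain R where R: "R \<subseteq> S'" "R \<noteq> {}"
      and two: "\<forall>b\<in>A - {a}. \<forall>x\<in>\<Union>R. N b x \<longrightarrow> (\<exists>w'\<in>\<Union>R. w' \<noteq> x \<and> N b w')"
      using less.hyps[of "A - {a}" S'] less.prems(1) by blast
    have "\<not> N a x" if "x \<in> \<Union>R" for x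
      using that R(1) unique unfolding S'_def by auto
    with two have "\<forall>b\<in>A. \<forall>x\<in>\<Union>R. N b x \<longrightarrow> (\<exists>w'\<in>\<Union>R. w' \<noteq> x \<and> N b w')"
      by blast
    moreover have "R \<subseteq> S" using R(1) unfolding S'_def by blast
    ultimately show ?thesis using R(2) by blast
  qed
qed

lemma components_subset: "U \<in> components E W \<Longrightarrow> U \<subseteq> W"
  unfolding components_def by auto

lemma pairwise_disjnt_components:
  assumes "symp E"
  shows "pairwise disjnt (components E W)"
proof (unfold pairwise_def disjnt_def, intro ballI impI)
  let ?r = "\<lambda>a b. a \<in> W \<and> b \<in> W \<and> E a b"
  have "symp ?r" using assms by (auto simp: symp_def)
  fix U U' assume "U \<in> components E W" "U' \<in> components E W" "U \<noteq> U'"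
  then obtain x x' where U: "U = {y \<in> W. ?r\<^sup>*\<^sup>* x y}" and U': "U' = {y \<in> W. ?r\<^sup>*\<^sup>* x' y}"
    unfolding components_def by blast
  show "U \<inter> U' = {}"
  proof (rule ccontr)
    assume "U \<inter> U' \<noteq> {}"
    then obtain z where "?r\<^sup>*\<^sup>* x z" "?r\<^sup>*\<^sup>* x' z" unfolding U U' by blast
    then have "?r\<^sup>*\<^sup>* x = ?r\<^sup>*\<^sup>* x'"
      using equivp_rtranclp[OF \<open>symp ?r\<close>] by (simp add: equivp_def)
    then show False using \<open>U \<noteq> U'\<close> unfolding U U' by simp
  qed
qed

lemma zq_win_mono:
  "zq_win V E q t F \<Longrightarrow> q' \<le> q \<Longrightarrow> zq_win V E q' t F"
proof (induction rule: zq_win.induct)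
  case (adversary_move S F t)
  then show ?case
    by (intro zq_win.adversary_move[of S]) auto
qed (auto intro: zq_win.intros)

lemma zq_win_any_q_if_few_tokens:
  assumes G: "simple_graph V E"
  shows "zq_win V E q t F \<Longrightarrow> card (active V E F) + t \<le> q \<Longrightarrow> zq_win V E q' t F"
proof (induction rule: zq_win.induct)
  case (finished F t)
  then show ?case by (simp add: zq_win.finished)
next
  case (token v F t)
  have "finite V" using G unfolding simple_graph_def by blast
  then have "card (active V E (insert v F)) \<le> card (active V E F) + 1"
    by (rule card_active_insert_le)
  with token have "zq_win V E q' t (insert v F)" by simp
  then show ?case by (rule zq_win.token[OF token(1)])
next
  case (force F F' t)
  have "finite V" using G unfolding simple_graph_def by blast
  then have "card (active V E F') \<le> card (active V E F)"
    using force(1) by (rule card_active_fill_step_le)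
  with force have "zq_win V E q' t F'" by simp
  then show ?case by (rule zq_win.force[OF force(1)])
next
  case (adversary_move S F t)
  have fin_V: "finite V" and sym_E: "symp E" and E_V: "\<And>x y. E x y \<Longrightarrow> x \<in> V"
    using G unfolding simple_graph_def symp_def by blast+
  have "finite S" using adversary_move(2) card.infinite by fastforce
  moreover have "card (active V E F) < card S" using adversary_move(2,4) by linarith
  moreover have "pairwise disjnt S"
    using pairwise_disjnt_components[OF sym_E] adversary_move(1) by (rule pairwise_subset)
  ultimately have "\<exists>R. R \<subseteq> S \<and> R \<noteq> {} \<and>
      (\<forall>a\<in>active V E F. \<forall>w\<in>\<Union>R. E a w \<longrightarrow> (\<exists>w'\<in>\<Union>R. w' \<noteq> w \<and> E a w'))"
    by (intro exists_subfamily_without_unique_neighbours finite_active fin_V)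
  then obtain R where R: "R \<subseteq> S" "R \<noteq> {}"
    and two: "\<forall>a\<in>active V E F. \<forall>w\<in>\<Union>R. E a w \<longrightarrow> (\<exists>w'\<in>\<Union>R. w' \<noteq> w \<and> E a w')"
    by blast
  have "R \<subseteq> components E (V - F)" using R(1) adversary_move(1) by (rule order_trans)
  then have R_unfilled: "\<Union>R \<subseteq> V - F" using components_subset by blast
  obtain F' where steps: "(fill_step E (F \<union> \<Union>R))\<^sup>*\<^sup>* F F'"
    and IH: "card (active V E F') + t \<le> q \<longrightarrow> zq_win V E q' t F'"
    using adversary_move(3) R(1,2) by auto
  have stuck: "\<not> fill_step E (F \<union> \<Union>R) F X" for X
  proof
    assume "fill_step E (F \<union> \<Union>R) F X"
    then obtain u w where u: "u \<in> F" and w: "w \<in> \<Union>R" "E u w"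
      and unique: "\<forall>x \<in> (F \<union> \<Union>R) - F. E u x \<longrightarrow> x = w"
      unfolding fill_step_def by blast
    have "u \<in> active V E F"
      using u w R_unfilled E_V unfolding active_def by blast
    with two w obtain w' where "w' \<in> \<Union>R" "w' \<noteq> w" "E u w'" by blast
    with unique R_unfilled show False by blast
  qed
  have "F' = F" using steps by (cases rule: converse_rtranclpE) (auto simp: stuck)
  then show ?case using IH adversary_move(4) by simp
qed

lemma zq_win_card_unfilled:
  assumes "finite V"
  shows "F \<subseteq> V \<Longrightarrow> zq_win V E q (card (V - F)) F"
proof (induction "card (V - F)" arbitrary: F rule: less_induct)
  case less
  show ?case
  proof (cases "F = V")
    case True
    then show ?thesis by (simp add: zq_win.finished)
  next
    case False
    then obtain v where v: "v \<in> V - F" using less.prems by blast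
    then have card_eq: "card (V - F) = Suc (card (V - insert v F))"
      using assms by (metis Diff_insert card_Suc_Diff1 finite_Diff)
    have "zq_win V E q (card (V - insert v F)) (insert v F)"
      using less.hyps[of "insert v F"] less.prems v card_eq by auto
    then show ?thesis
      unfolding card_eq by (rule zq_win.token[OF v])
  qed
qed

lemma zq_win_Zq:
  assumes "finite V"
  shows "zq_win V E q (Zq V E q) {}"
  unfolding Zq_def using zq_win_card_unfilled[OF assms, of "{}"] by (intro LeastI) simp

lemma Zq_le: "zq_win V E q t {} \<Longrightarrow> Zq V E q \<le> t"
  unfolding Zq_def by (rule Least_le)

theorem corollary2p3:
  fixes V :: "'a set" and E :: "'a \<Rightarrow> 'a \<Rightarrow> bool" and k :: nat
  assumes "simple_graph V E" and "k \<ge> 1" and "Zq V E k = k"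
  shows "Zq V E (k - 1) = k"
proof -
  have fin_V: "finite V" using assms(1) unfolding simple_graph_def by simp
  have "zq_win V E (k - 1) k {}"
    using zq_win_Zq[OF fin_V, of E k] assms(3) by (auto intro: zq_win_mono)
  then have upper: "Zq V E (k - 1) \<le> k" by (rule Zq_le)
  have "\<not> Zq V E (k - 1) < k"
  proof
    assume less: "Zq V E (k - 1) < k"
    have "active V E {} = {}" unfolding active_def by simp
    with less have "zq_win V E k (Zq V E (k - 1)) {}"
      by (intro zq_win_any_q_if_few_tokens[OF assms(1) zq_win_Zq[OF fin_V]]) simp
    then have "Zq V E k \<le> Zq V E (k - 1)" by (rule Zq_le)
    with less assms(3) show False by simp
  qed
  with upper show ?thesis by simp
qed

end
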